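(* Let $m,p,k$ be positive integers, let $W \in \mathbb{R}^{m\times p}$, $\vec{x}\in\mathbb{R}^p$, let $\Theta$ be a real matrix with $k$ columns, let $f_m$ be a fixed function defined on $\{-1,+1\}^m$ with values in real vectors of length equal to the number of rows of $\Theta$, let $y$ be a target value, and let $\ell$ be a real-valued loss function such that $\ell(\Theta^{\top} f_m(\vec{g}), y)\in\mathbb{R}$ is defined for every $\vec{g}\in\{-1,+1\}^m$. Then for all real numbers $a > b > 0$, \[ \max_{\vec{g} \in \{-1,+1\}^m}\Big(a\,\vec{g}^{\top}W\vec{x} + \ell(\Theta^{\top} f_m(\vec{g}), y)\Big) - \max_{\vec{h} \in \{-1,+1\}^m} \big( a\,\vec{h}^{\top}W\vec{x} \big) \;\le\; \max_{\vec{g} \in \{-1,+1\}^m}\Big( b\,\vec{g}^{\top}W\vec{x} + \ell(\Theta^{\top} f_m(\vec{g}), y)\Big) - \max_{\vec{h} \in \{-1,+1\}^m} \big( b\,\vec{h}^{\top}W\vec{x} \big). \]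
   Context: This arises in learning oblique decision trees: the $m$ rows of $W$ are the split hyperplanes of the $m$ internal nodes of a binary tree, $\operatorname{sign}(W\vec{x})=\arg\max_{\vec{h}\in\{-1,+1\}^m}\vec{h}^\top W\vec{x}$ gives the split decisions, $f_m(\vec{g})$ is the indicator vector of the leaf reached given the binary split decisions $\vec{g}$, $\Theta$ contains the leaf parameters (one row per leaf), and $\ell$ is the loss of the prediction $\Theta^\top f_m(\vec{g})$ against target $y$. The right-hand-side quantity with scale $1$ is an upper bound on $\ell(\Theta^\top f_m(\operatorname{sign}(W\vec{x})),y)$; the proposition says this bound becomes tighter (smaller) as $W$ is scaled up. *)

theory Defs
  imports "HOL-Analysis.Analysis"
begin

definition sign_vectors :: "(real ^ 'm) set" where
  "sign_vectors = {g. \<forall>i. g $ i = 1 \<or> g $ i = -1}"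

end

theory Submission
  imports Defs
begin

text \<open>Write \<open>u g = g \<bullet> W x\<close> and \<open>M = max u\<close> over the sign vectors. Scaling by \<open>c > 0\<close>
  does not move the maximiser, so \<open>max (c u) = c M\<close> and the bound at scale \<open>c\<close> equals
  \<open>max\<^sub>g (loss g - c (M - u g))\<close>. Every penalty \<open>M - u g\<close> is nonnegative, so this is
  antitone in \<open>c\<close>.\<close>

lemma finite_sign_vectors: "finite (sign_vectors :: (real ^ 'm) set)"
proof -
  have "sign_vectors \<subseteq> vec_lambda ` (PiE (UNIV :: 'm set) (\<lambda>_. {1, -1 :: real}))"
  proof
    fix g :: "real ^ 'm"
    assume "g \<in> sign_vectors"
    then have "(\<lambda>i. g $ i) \<in> PiE UNIV (\<lambda>_. {1, -1 :: real})"
      by (auto simp: sign_vectors_def)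
    then show "g \<in> vec_lambda ` PiE UNIV (\<lambda>_. {1, -1})"
      by (metis image_eqI vec_lambda_eta)
  qed
  then show ?thesis
    by (rule finite_subset) (intro finite_imageI finite_PiE; simp)
qed

lemma sign_vectors_nonempty: "(sign_vectors :: (real ^ 'm) set) \<noteq> {}"
proof -
  have "(\<chi> i. 1) \<in> (sign_vectors :: (real ^ 'm) set)"
    by (simp add: sign_vectors_def)
  then show ?thesis by blast
qed

lemma Max_mult_left:
  fixes f :: "'a \<Rightarrow> real"
  assumes "finite S" "S \<noteq> {}" "c \<ge> 0"
  shows "Max ((\<lambda>x. c * f x) ` S) = c * Max (f ` S)"
proof -
  have "mono ((*) c)"
    using \<open>c \<ge> 0\<close> by (auto intro: monoI mult_left_mono)
  then have "c * Max (f ` S) = Max ((*) c ` f ` S)"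
    using assms by (intro mono_Max_commute) auto
  then show ?thesis
    by (simp add: image_image)
qed

lemma Max_image_mono:
  fixes f g :: "'a \<Rightarrow> 'b :: linorder"
  assumes "finite S" "S \<noteq> {}" "\<And>x. x \<in> S \<Longrightarrow> f x \<le> g x"
  shows "Max (f ` S) \<le> Max (g ` S)"
  using assms by (auto intro: order.trans[OF _ Max_ge])

lemma Max_add_scaled_minus_Max_scaled_antimono:
  fixes u L :: "'a \<Rightarrow> real"
  assumes "finite S" "S \<noteq> {}" "0 \<le> b" "b \<le> a"
  shows "Max ((\<lambda>g. a * u g + L g) ` S) - Max ((\<lambda>h. a * u h) ` S)
       \<le> Max ((\<lambda>g. b * u g + L g) ` S) - Max ((\<lambda>h. b * u h) ` S)"
proof -
  define M where "M = Max (u ` S)"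
  have penalty_nonneg: "0 \<le> M - u g" if "g \<in> S" for g
    using assms that by (simp add: M_def)
  have shifted: "Max ((\<lambda>g. c * u g + L g) ` S) - Max ((\<lambda>h. c * u h) ` S)
      = Max ((\<lambda>g. L g - c * (M - u g)) ` S)" if "0 \<le> c" for c
  proof -
    have "Max ((\<lambda>g. L g - c * (M - u g)) ` S) = Max ((\<lambda>g. (c * u g + L g) + - (c * M)) ` S)"
      by (simp add: algebra_simps)
    also have "\<dots> = Max ((\<lambda>g. c * u g + L g) ` S) - c * M"
      using assms by (subst Max_add_commute) auto
    finally show ?thesis
      using assms that by (simp add: Max_mult_left M_def)
  qed
  have "Max ((\<lambda>g. L g - a * (M - u g)) ` S) \<le> Max ((\<lambda>g. L g - b * (M - u g)) ` S)"
    using assms penalty_nonneg by (intro Max_image_mono) (auto intro: mult_right_mono)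
  then show ?thesis
    using assms by (simp add: shifted)
qed

theorem proposition1:
  fixes W :: "real ^ 'p ^ 'm" and x :: "real ^ 'p"
    and \<Theta> :: "real ^ 'k ^ 'n"
    and f :: "real ^ 'm \<Rightarrow> real ^ 'n"
    and y :: 'y
    and loss :: "real ^ 'k \<Rightarrow> 'y \<Rightarrow> real"
    and a b :: real
  assumes "a > b" and "b > 0"
  shows "Max ((\<lambda>g. a * (g \<bullet> (W *v x)) + loss (transpose \<Theta> *v f g) y) ` sign_vectors)
           - Max ((\<lambda>h. a * (h \<bullet> (W *v x))) ` sign_vectors)
         \<le> Max ((\<lambda>g. b * (g \<bullet> (W *v x)) + loss (transpose \<Theta> *v f g) y) ` sign_vectors)
           - Max ((\<lambda>h. b * (h \<bullet> (W *v x))) ` sign_vectors)"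
  using assms finite_sign_vectors sign_vectors_nonempty
  by (intro Max_add_scaled_minus_Max_scaled_antimono) auto

end
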